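(* Let $I\subseteq \mathbb{K}[x_1,\dots,x_n]$ be a square-free monomial ideal which contains no variable. Assume that for some integer $s\geq 1$ the ideal $I^s$ has linear quotients with respect to (the restriction to $G(I^s)$ of) a monomial order. Then $I$ satisfies the strong gcd condition.
   Context: $G(I)$ denotes the set of minimal monomial generators of a monomial ideal $I$. A monomial ideal $I$ satisfies the strong gcd condition if there exists a linear order $\prec$ on $G(I)$ such that for any two monomials $u\prec v$ in $G(I)$ with $\gcd(u,v)=1$ there exists a monomial $w\in G(I)$ with $w\neq u,v$, $u\prec w$ and $w\mid uv$. A monomial order is a multiplicative total order on monomials with $1$ least. If $u_1\prec\dots\prec u_t$ is a linear order on $G(J)$, $J$ has linear quotients with respect to it if for every $2\leq i\leq t$ the ideal $(u_1,\dots,u_{i-1}):u_i$ is generated by a subset of the variables. *)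

theory Defs
  imports Main
begin

text \<open>Monomials in the variables of a finite type 'a (so n = CARD('a)) are exponent
vectors 'a \<Rightarrow> nat; multiplication is pointwise addition, 1 is the zero vector,
divisibility is the pointwise order, gcd is the pointwise minimum (inf).
A monomial ideal of K[x_1..x_n] is identified with the set of monomials it contains
(an upward closed set of exponent vectors); the field K plays no role.\<close>

type_synonym 'a monomial = "'a \<Rightarrow> nat"

definition mmult :: "'a monomial \<Rightarrow> 'a monomial \<Rightarrow> 'a monomial" where
  "mmult u v = (\<lambda>i. u i + v i)"

definition mdvd :: "'a monomial \<Rightarrow> 'a monomial \<Rightarrow> bool" where
  "mdvd u v \<longleftrightarrow> (\<forall>i. u i \<le> v i)"

definition mgcd :: "'a monomial \<Rightarrow> 'a monomial \<Rightarrow> 'a monomial" where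
  "mgcd u v = (\<lambda>i. min (u i) (v i))"

definition mone :: "'a monomial" where
  "mone = (\<lambda>i. 0)"

definition mvar :: "'a \<Rightarrow> 'a monomial" where
  "mvar j = (\<lambda>i. if i = j then 1 else 0)"

definition monomial_ideal :: "'a monomial set \<Rightarrow> bool" where
  "monomial_ideal I \<longleftrightarrow> (\<forall>u\<in>I. \<forall>v. mdvd u v \<longrightarrow> v \<in> I)"

definition mideal :: "'a monomial set \<Rightarrow> 'a monomial set" where
  "mideal S = {v. \<exists>u\<in>S. mdvd u v}"

definition mgens :: "'a monomial set \<Rightarrow> 'a monomial set" where
  "mgens I = {u \<in> I. \<forall>v\<in>I. mdvd v u \<longrightarrow> v = u}"

definition mideal_mult :: "'a monomial set \<Rightarrow> 'a monomial set \<Rightarrow> 'a monomial set" where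
  "mideal_mult I J = mideal {mmult u v | u v. u \<in> I \<and> v \<in> J}"

primrec mideal_pow :: "'a monomial set \<Rightarrow> nat \<Rightarrow> 'a monomial set" where
  "mideal_pow I 0 = mideal {mone}"
| "mideal_pow I (Suc s) = mideal_mult I (mideal_pow I s)"

definition mcolon :: "'a monomial set \<Rightarrow> 'a monomial \<Rightarrow> 'a monomial set" where
  "mcolon I u = {w. mmult w u \<in> I}"

definition squarefree_mideal :: "'a monomial set \<Rightarrow> bool" where
  "squarefree_mideal I \<longleftrightarrow> monomial_ideal I \<and> (\<forall>u\<in>mgens I. \<forall>i. u i \<le> 1)"

definition monomial_order :: "('a monomial \<Rightarrow> 'a monomial \<Rightarrow> bool) \<Rightarrow> bool" where
  "monomial_order mo \<longleftrightarrow>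
     (\<forall>u. \<not> mo u u) \<and>
     (\<forall>u v w. mo u v \<longrightarrow> mo v w \<longrightarrow> mo u w) \<and>
     (\<forall>u v. u \<noteq> v \<longrightarrow> mo u v \<or> mo v u) \<and>
     (\<forall>u v w. mo u v \<longrightarrow> mo (mmult u w) (mmult v w)) \<and>
     (\<forall>u. u \<noteq> mone \<longrightarrow> mo mone u)"

definition strict_linear_on :: "'b set \<Rightarrow> ('b \<Rightarrow> 'b \<Rightarrow> bool) \<Rightarrow> bool" where
  "strict_linear_on A lt \<longleftrightarrow>
     (\<forall>u\<in>A. \<not> lt u u) \<and>
     (\<forall>u\<in>A. \<forall>v\<in>A. \<forall>w\<in>A. lt u v \<longrightarrow> lt v w \<longrightarrow> lt u w) \<and>
     (\<forall>u\<in>A. \<forall>v\<in>A. u \<noteq> v \<longrightarrow> lt u v \<or> lt v u)"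

text \<open>J has linear quotients w.r.t. the restriction of lt to G(J): for every v in G(J)
the ideal generated by the elements of G(J) preceding v, colon v, is generated by
a set of variables (for the first element this is the zero ideal, generated by the
empty set of variables, so including it is harmless).\<close>
definition linear_quotients :: "'a monomial set \<Rightarrow> ('a monomial \<Rightarrow> 'a monomial \<Rightarrow> bool) \<Rightarrow> bool" where
  "linear_quotients J lt \<longleftrightarrow> strict_linear_on (mgens J) lt \<and>
     (\<forall>v\<in>mgens J. \<exists>V. mcolon (mideal {u \<in> mgens J. lt u v}) v = mideal (mvar ` V))"

definition strong_gcd :: "'a monomial set \<Rightarrow> bool" where
  "strong_gcd I \<longleftrightarrow> (\<exists>lt. strict_linear_on (mgens I) lt \<and>
     (\<forall>u\<in>mgens I. \<forall>v\<in>mgens I. lt u v \<and> mgcd u v = mone \<longrightarrow>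
        (\<exists>w\<in>mgens I. w \<noteq> u \<and> w \<noteq> v \<and> lt u w \<and> mdvd w (mmult u v))))"

end

theory Submission
  imports Defs
begin

text \<open>Order G(I) by the reverse of the monomial order. Let q precede p in the monomial order,
with gcd(p, q) = 1. As I is square-free, p^s is a minimal generator of I^s, and q p^(s-1) is a
smaller element of I^s dividing q p^s. So q lies in the colon of the earlier generators by p^s,
which is generated by variables: some variable x_i dividing q has x_i p^s in the ideal of earlier
generators. Hence a product w_1 \<cdots> w_s of generators of I, smaller than p^s, divides x_i p^s.
Some w_j then precedes p; square-freeness gives w_j | x_i p, hence w_j | pq, and w_j \<noteq> q
because q is not a variable.\<close>

definition mprod :: "'a monomial list \<Rightarrow> 'a monomial" where
  "mprod ws = foldr mmult ws mone"

definition mpow :: "'a monomial \<Rightarrow> nat \<Rightarrow> 'a monomial" where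
  "mpow p n = (\<lambda>k. n * p k)"

lemma mprod_Nil [simp]: "mprod [] = mone"
  by (simp add: mprod_def)

lemma mprod_Cons [simp]: "mprod (w # ws) = mmult w (mprod ws)"
  by (simp add: mprod_def)

lemma mmult_commute: "mmult u v = mmult v u"
  by (auto simp: mmult_def)

lemma mmult_mone_left [simp]: "mmult mone u = u"
  by (auto simp: mmult_def mone_def)

lemma mmult_mone_right [simp]: "mmult u mone = u"
  by (auto simp: mmult_def mone_def)

lemma mpow_0 [simp]: "mpow p 0 = mone"
  by (simp add: mpow_def mone_def)

lemma mpow_Suc: "mpow p (Suc n) = mmult p (mpow p n)"
  by (auto simp: mpow_def mmult_def)

lemma mprod_replicate: "mprod (replicate n p) = mpow p n"
  by (induction n) (simp_all add: mpow_Suc)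

lemma mdvd_refl [simp]: "mdvd u u"
  by (simp add: mdvd_def)

lemma mdvd_trans: "mdvd u v \<Longrightarrow> mdvd v w \<Longrightarrow> mdvd u w"
  by (auto simp: mdvd_def intro: order_trans)

lemma mdvd_antisym: "mdvd u v \<Longrightarrow> mdvd v u \<Longrightarrow> u = v"
  by (auto simp: mdvd_def fun_eq_iff intro: antisym)

lemma mdvd_mmult_mono: "mdvd u u' \<Longrightarrow> mdvd v v' \<Longrightarrow> mdvd (mmult u v) (mmult u' v')"
  by (auto simp: mdvd_def mmult_def add_mono)

lemma mdvd_mprod: "w \<in> set ws \<Longrightarrow> mdvd w (mprod ws)"
  by (induction ws) (auto simp: mdvd_def mmult_def intro: trans_le_add2)

lemma mem_mideal_self: "u \<in> S \<Longrightarrow> u \<in> mideal S"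
  unfolding mideal_def using mdvd_refl by blast

lemma mideal_mdvd_closed: "u \<in> mideal S \<Longrightarrow> mdvd u v \<Longrightarrow> v \<in> mideal S"
  unfolding mideal_def using mdvd_trans by blast

lemma mgens_subset: "mgens I \<subseteq> I"
  by (auto simp: mgens_def)

lemma mgens_dvd_eq: "u \<in> mgens I \<Longrightarrow> v \<in> I \<Longrightarrow> mdvd v u \<Longrightarrow> v = u"
  by (auto simp: mgens_def)

lemma mgcd_eq_mone_iff: "mgcd p q = mone \<longleftrightarrow> (\<forall>k. p k = 0 \<or> q k = 0)"
  unfolding mgcd_def mone_def fun_eq_iff by (metis min_0L min_0R min_def)

lemma mgens_dvd_exists:
  fixes u :: "('a::finite) monomial"
  assumes "u \<in> I"
  obtains g where "g \<in> mgens I" "mdvd g u"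
  using assms
proof (induction "\<Sum>k\<in>UNIV. u k" arbitrary: u rule: less_induct)
  case less
  show ?case
  proof (cases "u \<in> mgens I")
    case True
    then show ?thesis using less.prems(1) mdvd_refl by blast
  next
    case False
    then obtain v where v: "v \<in> I" "mdvd v u" "v \<noteq> u"
      using less.prems(2) by (auto simp: mgens_def)
    then obtain k where "v k < u k"
      by (auto simp: mdvd_def fun_eq_iff le_less)
    then have "(\<Sum>k\<in>UNIV. v k) < (\<Sum>k\<in>UNIV. u k)"
      using v(2) by (intro sum_strict_mono_ex1) (auto simp: mdvd_def)
    then show ?thesis
      using less.hyps v(1,2) less.prems(1) mdvd_trans by metis
  qed
qed

lemma mideal_pow_dvd_mprod:
  fixes c :: "('a::finite) monomial"
  assumes "c \<in> mideal_pow I n"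
  obtains ws where "length ws = n" "set ws \<subseteq> mgens I" "mdvd (mprod ws) c"
  using assms
proof (induction n arbitrary: c thesis)
  case 0
  then show ?case by (auto simp: mideal_def mdvd_def mone_def)
next
  case (Suc n)
  then obtain a b where ab: "a \<in> I" "b \<in> mideal_pow I n" "mdvd (mmult a b) c"
    by (auto simp: mideal_mult_def mideal_def)
  obtain ws where ws: "length ws = n" "set ws \<subseteq> mgens I" "mdvd (mprod ws) b"
    using Suc.IH[OF _ ab(2)] by blast
  obtain g where g: "g \<in> mgens I" "mdvd g a"
    using mgens_dvd_exists[OF ab(1)] by blast
  have "mdvd (mprod (g # ws)) c"
    using mdvd_mmult_mono[OF g(2) ws(3)] ab(3) mdvd_trans by simp
  then show ?case
    using Suc.prems(1)[of "g # ws"] ws g by simp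
qed

lemma mpow_mem_mideal_pow: "p \<in> I \<Longrightarrow> mpow p n \<in> mideal_pow I n"
proof (induction n)
  case 0
  then show ?case by (simp add: mem_mideal_self)
next
  case (Suc n)
  then show ?case
    unfolding mpow_Suc mideal_pow.simps mideal_mult_def by (blast intro: mem_mideal_self)
qed

lemma mmult_mem_mideal_pow_Suc:
  "p \<in> I \<Longrightarrow> b \<in> mideal_pow I n \<Longrightarrow> mmult p b \<in> mideal_pow I (Suc n)"
  unfolding mideal_pow.simps mideal_mult_def by (blast intro: mem_mideal_self)

lemma squarefree_mdvd_mult_mpow:
  assumes "\<forall>k. w k \<le> 1" and "s \<ge> 1" and "mdvd w (mmult a (mpow p s))"
  shows "mdvd w (mmult a p)"
  unfolding mdvd_def
proof
  fix k
  have "w k \<le> a k + s * p k"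
    using assms(3) by (simp add: mdvd_def mmult_def mpow_def)
  then show "w k \<le> mmult a p k"
    using assms(1,2) by (cases "p k") (auto simp: mmult_def intro: order_trans[of _ 1])
qed

lemma mpow_mem_mgens_mideal_pow:
  fixes I :: "('a::finite) monomial set"
  assumes "squarefree_mideal I" and "p \<in> mgens I" and "s \<ge> 1"
  shows "mpow p s \<in> mgens (mideal_pow I s)"
proof -
  have "v = mpow p s" if v: "v \<in> mideal_pow I s" "mdvd v (mpow p s)" for v
  proof -
    obtain ws where ws: "length ws = s" "set ws \<subseteq> mgens I" "mdvd (mprod ws) v"
      using mideal_pow_dvd_mprod[OF v(1)] by blast
    have "w = p" if w: "w \<in> set ws" for w
    proof -
      have "mdvd w (mpow p s)"
        using mdvd_mprod[OF w] ws(3) v(2) mdvd_trans by blast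
      then have "mdvd w p"
        using squarefree_mdvd_mult_mpow[of w s mone p] w ws(2) assms(1,3)
        by (auto simp: squarefree_mideal_def)
      then show ?thesis
        using mgens_dvd_eq[OF assms(2)] w ws(2) mgens_subset by blast
    qed
    then have "ws = replicate s p"
      using ws(1) by (intro replicate_eqI) auto
    then show ?thesis
      using ws(3) v(2) mdvd_antisym by (simp add: mprod_replicate)
  qed
  then show ?thesis
    using mpow_mem_mideal_pow assms(2) mgens_subset by (auto simp: mgens_def)
qed

context
  fixes mo :: "'a monomial \<Rightarrow> 'a monomial \<Rightarrow> bool"
  assumes mo: "monomial_order mo"
begin

lemma monomial_order_irrefl: "\<not> mo u u"
  using mo by (simp add: monomial_order_def)

lemma monomial_order_trans: "mo u v \<Longrightarrow> mo v w \<Longrightarrow> mo u w"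
  using mo unfolding monomial_order_def by blast

lemma monomial_order_total: "u \<noteq> v \<Longrightarrow> mo u v \<or> mo v u"
  using mo by (simp add: monomial_order_def)

lemma monomial_order_mult_right: "mo u v \<Longrightarrow> mo (mmult u w) (mmult v w)"
  using mo by (simp add: monomial_order_def)

lemma monomial_order_mult_left: "mo u v \<Longrightarrow> mo (mmult w u) (mmult w v)"
  using mo mmult_commute unfolding monomial_order_def by metis

lemma monomial_order_mdvd: "mdvd g m \<Longrightarrow> g = m \<or> mo g m"
proof -
  assume "mdvd g m"
  define d where "d = (\<lambda>k. m k - g k)"
  have m: "m = mmult g d"
    using \<open>mdvd g m\<close> by (auto simp: d_def mmult_def mdvd_def)
  show ?thesis
  proof (cases "d = mone")
    case False
    then have "mo mone d"
      using mo by (simp add: monomial_order_def)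
    then show ?thesis
      using monomial_order_mult_left[of mone d g] m by simp
  qed (simp add: m)
qed

lemma monomial_order_mdvd_less: "mdvd g m \<Longrightarrow> mo m P \<Longrightarrow> mo g P"
  using monomial_order_mdvd monomial_order_trans by blast

lemma monomial_order_mpow_le_mprod:
  assumes "\<forall>w\<in>set ws. w = p \<or> mo p w"
  shows "mprod ws = mpow p (length ws) \<or> mo (mpow p (length ws)) (mprod ws)"
  using assms
proof (induction ws)
  case (Cons w ws)
  let ?M = "mpow p (length ws)" and ?P = "mprod ws"
  have "mmult p ?M = mmult w ?M \<or> mo (mmult p ?M) (mmult w ?M)"
    using Cons.prems monomial_order_mult_right by auto
  moreover have "mmult w ?M = mmult w ?P \<or> mo (mmult w ?M) (mmult w ?P)"
    using Cons monomial_order_mult_left by auto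
  ultimately have "mmult p ?M = mmult w ?P \<or> mo (mmult p ?M) (mmult w ?P)"
    using monomial_order_trans by (elim disjE) auto
  then show ?case
    by (auto simp: mpow_Suc)
qed simp

lemma mprod_less_mpow_obtains_less:
  assumes "mo (mprod ws) (mpow p (length ws))"
  obtains w where "w \<in> set ws" "mo w p"
proof -
  have "\<exists>w\<in>set ws. mo w p"
  proof (rule ccontr)
    assume "\<not> (\<exists>w\<in>set ws. mo w p)"
    then have "\<forall>w\<in>set ws. w = p \<or> mo p w"
      using monomial_order_total by blast
    then have "mprod ws = mpow p (length ws) \<or> mo (mpow p (length ws)) (mprod ws)"
      by (rule monomial_order_mpow_le_mprod)
    then show False
      using assms monomial_order_irrefl monomial_order_trans by metis
  qed
  then show ?thesis
    using that by blast
qed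

end

lemma mem_mideal_preceding_mgens:
  fixes J :: "('a::finite) monomial set"
  assumes "monomial_order mo" and "m \<in> J" and "mo m P"
  shows "m \<in> mideal {u \<in> mgens J. mo u P}"
proof -
  obtain g where g: "g \<in> mgens J" "mdvd g m"
    using mgens_dvd_exists[OF assms(2)] .
  moreover have "mo g P"
    using monomial_order_mdvd_less[OF assms(1)] g(2) assms(3) by blast
  ultimately show ?thesis
    unfolding mideal_def by blast
qed

lemma linear_quotients_colon_variable:
  assumes "linear_quotients J lt" and "P \<in> mgens J"
    and "mmult q P \<in> mideal {u \<in> mgens J. lt u P}"
  obtains i where "mdvd (mvar i) q" "mmult (mvar i) P \<in> mideal {u \<in> mgens J. lt u P}"
proof -
  obtain V where V: "mcolon (mideal {u \<in> mgens J. lt u P}) P = mideal (mvar ` V)"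
    using assms(1,2) by (auto simp: linear_quotients_def)
  then obtain i where "i \<in> V" "mdvd (mvar i) q"
    using assms(3) by (auto simp: mcolon_def mideal_def)
  moreover have "mvar i \<in> mcolon (mideal {u \<in> mgens J. lt u P}) P"
    using V \<open>i \<in> V\<close> by (simp add: mem_mideal_self)
  ultimately show ?thesis
    using that by (simp add: mcolon_def)
qed

lemma linear_quotients_mideal_pow_obtains_gen:
  fixes I :: "('a::finite) monomial set"
  assumes sqfree: "squarefree_mideal I" and "s \<ge> 1" and mo: "monomial_order mo"
    and lq: "linear_quotients (mideal_pow I s) mo"
    and p: "p \<in> mgens I" and q: "q \<in> mgens I" and "mo q p"
  obtains i w where "mdvd (mvar i) q" "w \<in> mgens I" "mo w p" "mdvd w (mmult (mvar i) p)"
proof -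
  let ?J = "mideal_pow I s" and ?P = "mpow p s"
  let ?E = "mideal {u \<in> mgens ?J. mo u ?P}"
  obtain n where s: "s = Suc n"
    using \<open>s \<ge> 1\<close> by (cases s) auto
  have PJ: "?P \<in> mgens ?J"
    using mpow_mem_mgens_mideal_pow[OF sqfree p \<open>s \<ge> 1\<close>] .
  have "mmult q (mpow p n) \<in> ?J"
    unfolding s using q p mgens_subset by (blast intro: mmult_mem_mideal_pow_Suc mpow_mem_mideal_pow)
  moreover have "mo (mmult q (mpow p n)) ?P"
    unfolding s mpow_Suc using monomial_order_mult_right[OF mo, OF \<open>mo q p\<close>] .
  ultimately have "mmult q (mpow p n) \<in> ?E"
    by (rule mem_mideal_preceding_mgens[OF mo])
  moreover have "mdvd (mmult q (mpow p n)) (mmult q ?P)"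
    by (auto simp: s mpow_def mmult_def mdvd_def)
  ultimately have "mmult q ?P \<in> ?E"
    by (rule mideal_mdvd_closed)
  then obtain i where i: "mdvd (mvar i) q" "mmult (mvar i) ?P \<in> ?E"
    using linear_quotients_colon_variable[OF lq PJ] by blast
  then obtain c where c: "c \<in> mgens ?J" "mo c ?P" "mdvd c (mmult (mvar i) ?P)"
    by (auto simp: mideal_def)
  obtain ws where ws: "length ws = s" "set ws \<subseteq> mgens I" "mdvd (mprod ws) c"
    using mideal_pow_dvd_mprod c(1) mgens_subset by blast
  have "mo (mprod ws) (mpow p (length ws))"
    using monomial_order_mdvd_less[OF mo] ws(1,3) c(2) by blast
  then obtain w where w: "w \<in> set ws" "mo w p"
    by (rule mprod_less_mpow_obtains_less[OF mo])
  have "w \<in> mgens I"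
    using w(1) ws(2) by blast
  then have "\<forall>k. w k \<le> 1"
    using sqfree by (simp add: squarefree_mideal_def)
  moreover have "mdvd w (mmult (mvar i) ?P)"
    using mdvd_mprod[OF w(1)] ws(3) c(3) mdvd_trans by blast
  ultimately have "mdvd w (mmult (mvar i) p)"
    using squarefree_mdvd_mult_mpow \<open>s \<ge> 1\<close> by blast
  then show ?thesis
    using that i(1) w(2) \<open>w \<in> mgens I\<close> by blast
qed

lemma strong_gcd_witness:
  fixes I :: "('a::finite) monomial set"
  assumes "squarefree_mideal I" and "\<forall>i. mvar i \<notin> I" and "s \<ge> 1"
    and mo: "monomial_order mo" and "linear_quotients (mideal_pow I s) mo"
    and p: "p \<in> mgens I" and q: "q \<in> mgens I" and "mo q p" and "mgcd p q = mone"
  shows "\<exists>w\<in>mgens I. w \<noteq> p \<and> w \<noteq> q \<and> mo w p \<and> mdvd w (mmult p q)"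
proof -
  obtain i w where i: "mdvd (mvar i) q" and w: "w \<in> mgens I" "mo w p" "mdvd w (mmult (mvar i) p)"
    using linear_quotients_mideal_pow_obtains_gen[OF assms(1,3) mo, OF assms(5-8)] by blast
  have disjoint: "p k = 0 \<or> q k = 0" for k
    using \<open>mgcd p q = mone\<close> by (simp add: mgcd_eq_mone_iff)
  have "w \<noteq> q"
  proof
    assume "w = q"
    have "mdvd q (mvar i)"
      unfolding mdvd_def
    proof
      fix k
      have "q k \<le> mvar i k + p k"
        using w(3) \<open>w = q\<close> by (simp add: mdvd_def mmult_def)
      then show "q k \<le> mvar i k"
        using disjoint[of k] by auto
    qed
    then show False
      using mdvd_antisym[OF i] q assms(2) mgens_subset by blast
  qed
  moreover have "mdvd w (mmult p q)"
    using w(3) mdvd_trans[OF _ mdvd_mmult_mono[OF mdvd_refl i]]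
    by (simp add: mmult_commute[of "mvar i" p])
  moreover have "w \<noteq> p"
    using w(2) monomial_order_irrefl[OF mo] by blast
  ultimately show ?thesis
    using w(1,2) by blast
qed

theorem corollary2p8:
  fixes I :: "('a::finite) monomial set" and s :: nat
    and mo :: "'a monomial \<Rightarrow> 'a monomial \<Rightarrow> bool"
  assumes "monomial_ideal I"
    and "squarefree_mideal I"
    and "\<forall>i. mvar i \<notin> I"
    and "s \<ge> 1"
    and "monomial_order mo"
    and "linear_quotients (mideal_pow I s) mo"
  shows "strong_gcd I"
proof -
  have "strict_linear_on (mgens I) (\<lambda>u v. mo v u)"
    using monomial_order_irrefl[OF assms(5)] monomial_order_trans[OF assms(5)]
      monomial_order_total[OF assms(5)]
    unfolding strict_linear_on_def by blast
  then show ?thesis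
    unfolding strong_gcd_def
    using strong_gcd_witness[OF assms(2-6)] by blast
qed

end
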